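(* Let $T=(p,q:F\to E)$ be a textile system in which $F$ is source-free, $q|_{F^0}:F^0\to E^0$ is onto, and $q$ has $r$-path lifting. Then $\mathsf X^+_T$ is nonempty.
   Context: Directed graph $F=(F^0,F^1,r,s)$; source-free means $r:F^1\to F^0$ is onto. Textile system $T=(p,q:F\to E)$: graph homomorphisms $p,q$ (commuting with $r,s$) with $f\mapsto(r(f),p(f),s(f),q(f))$ injective on $F^1$. $q$ has $r$-path lifting if for all $v\in F^0$, $e\in E^1$ with $q(v)=r(e)$ there exists (not necessarily unique) $f\in F^1$ with $q(f)=e$ and $r(f)=v$. $\mathsf X^+_T=\{x:\mathbb N^2\to F^1: s(x_n)=r(x_{n+\varepsilon_1}),\ p(x_n)=q(x_{n+\varepsilon_2})\ \forall n\in\mathbb N^2\}$, $\mathbb N=\{0,1,\dots\}$. *)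

theory Defs
  imports Main
begin

record ('v, 'e) dgraph =
  verts :: "'v set"
  edges :: "'e set"
  rng :: "'e \<Rightarrow> 'v"
  src :: "'e \<Rightarrow> 'v"

definition is_dgraph :: "('v, 'e) dgraph \<Rightarrow> bool" where
  "is_dgraph G \<longleftrightarrow> (\<forall>e\<in>edges G. rng G e \<in> verts G \<and> src G e \<in> verts G)"

definition graph_hom ::
  "('v, 'e) dgraph \<Rightarrow> ('w, 'f) dgraph \<Rightarrow> ('v \<Rightarrow> 'w) \<Rightarrow> ('e \<Rightarrow> 'f) \<Rightarrow> bool" where
  "graph_hom G H h0 h1 \<longleftrightarrow>
     (\<forall>v\<in>verts G. h0 v \<in> verts H) \<and>
     (\<forall>e\<in>edges G. h1 e \<in> edges H \<and>
        rng H (h1 e) = h0 (rng G e) \<and> src H (h1 e) = h0 (src G e))"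

definition textile_system ::
  "('v, 'e) dgraph \<Rightarrow> ('w, 'f) dgraph \<Rightarrow> ('v \<Rightarrow> 'w) \<Rightarrow> ('e \<Rightarrow> 'f)
     \<Rightarrow> ('v \<Rightarrow> 'w) \<Rightarrow> ('e \<Rightarrow> 'f) \<Rightarrow> bool" where
  "textile_system F E p0 p1 q0 q1 \<longleftrightarrow>
     is_dgraph F \<and> is_dgraph E \<and> graph_hom F E p0 p1 \<and> graph_hom F E q0 q1 \<and>
     inj_on (\<lambda>f. (rng F f, p1 f, src F f, q1 f)) (edges F)"

definition source_free :: "('v, 'e) dgraph \<Rightarrow> bool" where
  "source_free F \<longleftrightarrow> rng F ` edges F = verts F"

definition r_path_lifting ::
  "('v, 'e) dgraph \<Rightarrow> ('w, 'f) dgraph \<Rightarrow> ('v \<Rightarrow> 'w) \<Rightarrow> ('e \<Rightarrow> 'f) \<Rightarrow> bool" where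
  "r_path_lifting F E q0 q1 \<longleftrightarrow>
     (\<forall>v\<in>verts F. \<forall>e\<in>edges E. q0 v = rng E e \<longrightarrow>
        (\<exists>f\<in>edges F. q1 f = e \<and> rng F f = v))"

definition X_plus ::
  "('v, 'e) dgraph \<Rightarrow> ('e \<Rightarrow> 'f) \<Rightarrow> ('e \<Rightarrow> 'f) \<Rightarrow> (nat \<times> nat \<Rightarrow> 'e) set" where
  "X_plus F p1 q1 = {x. (\<forall>n. x n \<in> edges F) \<and>
     (\<forall>i j. src F (x (i, j)) = rng F (x (Suc i, j)) \<and>
            p1 (x (i, j)) = q1 (x (i, Suc j)))}"

end

theory Submission
  imports Defs
begin

(* Starting from any infinite path of F, r-path lifting produces, edge by edge from the
   range end, an infinite path whose q-image is the p-image of the given one; this new path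
   is the next row of a point of X^+. Iterating from one infinite path, which exists since
   F is source-free, fills the whole quadrant. *)

definition infinite_path :: "('v, 'e) dgraph \<Rightarrow> (nat \<Rightarrow> 'e) \<Rightarrow> bool" where
  "infinite_path F R \<longleftrightarrow> (\<forall>i. R i \<in> edges F \<and> src F (R i) = rng F (R (Suc i)))"

lemma source_free_infinite_path_exists:
  assumes "is_dgraph F" "source_free F" "verts F \<noteq> {}"
  shows "\<exists>R. infinite_path F R"
proof -
  have "\<exists>R. \<forall>n. R n \<in> edges F \<and> src F (R n) = rng F (R (Suc n))"
  proof (rule dependent_nat_choice)
    show "\<exists>f. f \<in> edges F"
      using assms(2,3) unfolding source_free_def by auto
  next
    fix f
    assume "f \<in> edges F"
    then have "src F f \<in> verts F"
      using assms(1) unfolding is_dgraph_def by auto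
    then show "\<exists>g. g \<in> edges F \<and> src F f = rng F g"
      using assms(2) unfolding source_free_def by force
  qed
  then show ?thesis
    unfolding infinite_path_def .
qed

lemma r_path_lifting_infinite_path:
  assumes F: "is_dgraph F" and E: "is_dgraph E"
    and p: "graph_hom F E p0 p1" and q: "graph_hom F E q0 q1"
    and q0_onto: "q0 ` verts F = verts E"
    and lifting: "r_path_lifting F E q0 q1"
    and R: "infinite_path F R"
  shows "\<exists>R'. infinite_path F R' \<and> (\<forall>i. q1 (R' i) = p1 (R i))"
proof -
  have R_edge: "R i \<in> edges F" and R_link: "src F (R i) = rng F (R (Suc i))" for i
    using R unfolding infinite_path_def by auto
  have pR_edge: "p1 (R i) \<in> edges E" for i
    using p R_edge unfolding graph_hom_def by auto
  have lift: "\<exists>f\<in>edges F. q1 f = p1 (R i) \<and> rng F f = v"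
    if "v \<in> verts F" "q0 v = rng E (p1 (R i))" for v i
    using lifting that pR_edge unfolding r_path_lifting_def by blast
  have "\<exists>R'. \<forall>n. (R' n \<in> edges F \<and> q1 (R' n) = p1 (R n)) \<and> src F (R' n) = rng F (R' (Suc n))"
  proof (rule dependent_nat_choice)
    have "rng E (p1 (R 0)) \<in> verts E"
      using E pR_edge unfolding is_dgraph_def by auto
    then obtain v where "v \<in> verts F" "q0 v = rng E (p1 (R 0))"
      using q0_onto by force
    then show "\<exists>f. f \<in> edges F \<and> q1 f = p1 (R 0)"
      using lift by blast
  next
    fix f n
    assume f: "f \<in> edges F \<and> q1 f = p1 (R n)"
    have "src F f \<in> verts F"
      using F f unfolding is_dgraph_def by auto
    moreover have "q0 (src F f) = rng E (p1 (R (Suc n)))"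
    proof -
      have "q0 (src F f) = src E (p1 (R n))"
        using q f unfolding graph_hom_def by auto
      also have "\<dots> = p0 (rng F (R (Suc n)))"
        using p R_edge R_link unfolding graph_hom_def by auto
      also have "\<dots> = rng E (p1 (R (Suc n)))"
        using p R_edge unfolding graph_hom_def by auto
      finally show ?thesis .
    qed
    ultimately show "\<exists>g. (g \<in> edges F \<and> q1 g = p1 (R (Suc n))) \<and> src F f = rng F g"
      using lift by fastforce
  qed
  then show ?thesis
    unfolding infinite_path_def by blast
qed

theorem theorem3p6:
  fixes F :: "('v, 'e) dgraph" and E :: "('w, 'f) dgraph"
    and p0 q0 :: "'v \<Rightarrow> 'w" and p1 q1 :: "'e \<Rightarrow> 'f"
  assumes "textile_system F E p0 p1 q0 q1"
    and "source_free F"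
    and "q0 ` verts F = verts E"
    and "r_path_lifting F E q0 q1"
    and "verts F \<noteq> {}"
  shows "X_plus F p1 q1 \<noteq> {}"
proof -
  have F: "is_dgraph F" and E: "is_dgraph E"
    and p: "graph_hom F E p0 p1" and q: "graph_hom F E q0 q1"
    using assms(1) unfolding textile_system_def by auto
  obtain rows where rows: "\<And>j. infinite_path F (rows j)"
    and stacked: "\<And>i j. q1 (rows (Suc j) i) = p1 (rows j i)"
    using dependent_nat_choice[where P = "\<lambda>_. infinite_path F"
        and Q = "\<lambda>_ R R'. \<forall>i. q1 (R' i) = p1 (R i)"]
      source_free_infinite_path_exists[OF F assms(2,5)]
      r_path_lifting_infinite_path[OF F E p q assms(3,4)]
    by metis
  have "(\<lambda>(i, j). rows j i) \<in> X_plus F p1 q1"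
    using rows stacked unfolding X_plus_def infinite_path_def by auto
  then show ?thesis
    by blast
qed

end
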